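(* Let $\mathcal F$ be a completely positive trace-preserving map on $M_D$ with $\tau(\mathcal F)<1$, and let $\mathcal Z$ be its fundamental channel. Then $$\|\mathcal Z\|_{1\to1}\le\frac{1+\tau(\mathcal F)}{1-\tau(\mathcal F)}.$$
   Context: Notation: $M_D$ is the space of complex $D\times D$ matrices, and $\|\mathcal F\|_{1\to1}:=\sup_{\sigma\ne0}\|\mathcal F(\sigma)\|_1/\|\sigma\|_1$ with $\|\cdot\|_1$ the trace norm. The ergodicity coefficient is $\tau(\mathcal F):=\sup\{\|\mathcal F(\sigma)\|_1/\|\sigma\|_1:\ 0\ne\sigma,\ \mathrm{Tr}\,\sigma=0\}$. Fundamental channel: for a completely positive trace-preserving map $\mathcal F$ with $\tau(\mathcal F)<1$ and unique fixed density matrix $\rho$, let $\mathcal F^\infty(X):=\mathrm{Tr}(X)\,\rho$, which equals $\lim_{k\to\infty}\mathcal F^k$. The fundamental channel is $\mathcal Z:=(\mathrm{id}-\mathcal F+\mathcal F^\infty)^{-1}$. *)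

theory Defs
  imports "HOL-Analysis.Analysis"
begin

text \<open>Complex D x D matrices are modelled as complex^'n^'n with D = CARD('n).
  A superoperator is a map (complex^'n^'n) => (complex^'n^'n).\<close>

definition mat_adj :: "complex^'n^'n \<Rightarrow> complex^'n^'n" where
  "mat_adj A = (\<chi> i j. cnj (A $ j $ i))"

definition psd :: "complex^'n^'n \<Rightarrow> bool" where
  "psd A \<longleftrightarrow> mat_adj A = A \<and>
     (\<forall>v::complex^'n. 0 \<le> Re (\<Sum>i\<in>UNIV. \<Sum>j\<in>UNIV. cnj (v $ i) * A $ i $ j * v $ j))"

definition mat_abs :: "complex^'n^'n \<Rightarrow> complex^'n^'n" where
  "mat_abs A = (THE P. psd P \<and> P ** P = mat_adj A ** A)"

definition trace_norm :: "complex^'n^'n \<Rightarrow> real" where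
  "trace_norm A = Re (trace (mat_abs A))"

definition density_matrix :: "complex^'n^'n \<Rightarrow> bool" where
  "density_matrix \<rho> \<longleftrightarrow> psd \<rho> \<and> trace \<rho> = 1"

definition clinear_map :: "(complex^'n^'n \<Rightarrow> complex^'n^'n) \<Rightarrow> bool" where
  "clinear_map F \<longleftrightarrow> (\<forall>X Y. F (X + Y) = F X + F Y) \<and>
                      (\<forall>c X. F ((\<chi> i j. c * X $ i $ j)) = (\<chi> i j. c * F X $ i $ j))"

definition psd_on :: "'i set \<Rightarrow> ('i \<Rightarrow> 'i \<Rightarrow> complex) \<Rightarrow> bool" where
  "psd_on I M \<longleftrightarrow> (\<forall>i\<in>I. \<forall>j\<in>I. M i j = cnj (M j i)) \<and>
     (\<forall>v. 0 \<le> Re (\<Sum>i\<in>I. \<Sum>j\<in>I. cnj (v i) * M i j * v j))"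

text \<open>Ampliation id_k \<otimes> F acting on M_k(M_D), block matrices indexed by {..<k} \<times> 'n.\<close>
definition ampliation :: "(complex^'n^'n \<Rightarrow> complex^'n^'n) \<Rightarrow>
    (nat \<times> 'n \<Rightarrow> nat \<times> 'n \<Rightarrow> complex) \<Rightarrow> (nat \<times> 'n \<Rightarrow> nat \<times> 'n \<Rightarrow> complex)" where
  "ampliation F X = (\<lambda>(a, i) (b, j). F (\<chi> i' j'. X (a, i') (b, j')) $ i $ j)"

definition completely_positive :: "(complex^'n^'n \<Rightarrow> complex^'n^'n) \<Rightarrow> bool" where
  "completely_positive F \<longleftrightarrow>
     (\<forall>k::nat. \<forall>X. psd_on ({..<k} \<times> UNIV) X \<longrightarrow> psd_on ({..<k} \<times> UNIV) (ampliation F X))"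

definition trace_preserving :: "(complex^'n^'n \<Rightarrow> complex^'n^'n) \<Rightarrow> bool" where
  "trace_preserving F \<longleftrightarrow> (\<forall>X. trace (F X) = trace X)"

definition cptp :: "(complex^'n^'n \<Rightarrow> complex^'n^'n) \<Rightarrow> bool" where
  "cptp F \<longleftrightarrow> clinear_map F \<and> completely_positive F \<and> trace_preserving F"

definition norm_1to1 :: "(complex^'n^'n \<Rightarrow> complex^'n^'n) \<Rightarrow> real" where
  "norm_1to1 F = Sup {trace_norm (F \<sigma>) / trace_norm \<sigma> | \<sigma>. \<sigma> \<noteq> 0}"

text \<open>Ergodicity coefficient; sup over traceless nonzero sigma (0 included so that the
  supremum of the empty set, occurring only for D = 1, is 0).\<close>
definition ergodicity_coeff :: "(complex^'n^'n \<Rightarrow> complex^'n^'n) \<Rightarrow> real" where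
  "ergodicity_coeff F =
     Sup (insert 0 {trace_norm (F \<sigma>) / trace_norm \<sigma> | \<sigma>. \<sigma> \<noteq> 0 \<and> trace \<sigma> = 0})"

definition limit_channel :: "complex^'n^'n \<Rightarrow> (complex^'n^'n \<Rightarrow> complex^'n^'n)" where
  "limit_channel \<rho> = (\<lambda>X. (\<chi> i j. trace X * \<rho> $ i $ j))"

definition fundamental_channel ::
    "(complex^'n^'n \<Rightarrow> complex^'n^'n) \<Rightarrow> complex^'n^'n \<Rightarrow> (complex^'n^'n \<Rightarrow> complex^'n^'n)" where
  "fundamental_channel F \<rho> = inv (\<lambda>X. X - F X + limit_channel \<rho> X)"

end

theory Submission
  imports Defs
begin

(* For sigma let Y = Z sigma, so that Y - F Y + Tr(Y) rho = sigma and Tr Y = Tr sigma.  The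
   traceless part Y0 = Y - Tr(sigma) rho satisfies Y0 = (sigma - Tr(sigma) rho) + F Y0 and
   Y = sigma + F Y0.  Since |Tr sigma| <= ||sigma||_1 and ||rho||_1 = 1, the first identity gives
   (1 - tau) ||Y0||_1 <= 2 ||sigma||_1 and the second ||Y||_1 <= ||sigma||_1 + tau ||Y0||_1, whence
   (1 - tau) ||Y||_1 <= (1 + tau) ||sigma||_1.  For sigma = 0 the same estimate shows that
   id - F + F^\<infinity> is injective, hence invertible.

   The properties of ||.||_1 used here (triangle inequality, |Tr A| <= ||A||_1, boundedness of F)
   all follow from the bound ||sum_k c_k x_k y_k^*||_1 <= sum_k |c_k| for vectors of norm at most 1,
   proved by testing against a singular value decomposition of A.  That decomposition comes from
   the spectral theorem for the Hermitian matrix A^* A, proved by maximising the Rayleigh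
   quotient. *)

section \<open>The inner product on complex vectors\<close>

definition cinner :: "complex^'n \<Rightarrow> complex^'n \<Rightarrow> complex" where
  "cinner u v = (\<Sum>i\<in>UNIV. cnj (u$i) * v$i)"

lemma cinner_add_right: "cinner u (v + w) = cinner u v + cinner u w"
  by (simp add: cinner_def distrib_left sum.distrib)

lemma cinner_add_left: "cinner (v + w) u = cinner v u + cinner w u"
  by (simp add: cinner_def distrib_right sum.distrib)

lemma cinner_diff_right: "cinner u (v - w) = cinner u v - cinner u w"
  by (simp add: cinner_def right_diff_distrib sum_subtractf)

lemma cinner_diff_left: "cinner (v - w) u = cinner v u - cinner w u"
  by (simp add: cinner_def left_diff_distrib sum_subtractf)

lemma cinner_scale_right: "cinner u (c *s v) = c * cinner u v"
  by (simp add: cinner_def sum_distrib_left algebra_simps)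

lemma cinner_scale_left: "cinner (c *s v) u = cnj c * cinner v u"
  by (simp add: cinner_def sum_distrib_left algebra_simps)

lemma cinner_zero_left [simp]: "cinner 0 u = 0"
  by (simp add: cinner_def)

lemma cinner_zero_right [simp]: "cinner u 0 = 0"
  by (simp add: cinner_def)

lemma cinner_sum_right: "cinner u (\<Sum>k\<in>K. f k) = (\<Sum>k\<in>K. cinner u (f k))"
  by (simp add: cinner_def sum_distrib_left sum.swap[of _ K])

lemma cinner_sum_left: "cinner (\<Sum>k\<in>K. f k) u = (\<Sum>k\<in>K. cinner (f k) u)"
  by (simp add: cinner_def sum_distrib_right sum.swap[of _ K] cnj_sum)

lemma cinner_commute: "cinner u v = cnj (cinner v u)"
  by (simp add: cinner_def cnj_sum mult.commute)

lemma cinner_eq_0_commute: "cinner u v = 0 \<longleftrightarrow> cinner v u = 0"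
  by (metis cinner_commute complex_cnj_zero)

lemma cinner_self: "cinner v v = complex_of_real ((norm v)^2)"
proof -
  have "(norm v)^2 = (\<Sum>i\<in>UNIV. (cmod (v$i))^2)"
    by (simp add: norm_vec_def L2_set_def sum_nonneg)
  moreover have "cinner v v = (\<Sum>i\<in>UNIV. complex_of_real ((cmod (v$i))^2))"
    unfolding cinner_def by (intro sum.cong refl) (subst complex_norm_square, rule mult.commute)
  ultimately show ?thesis by (simp add: of_real_sum)
qed

lemma power2_norm_eq_cinner: "(norm v)^2 = Re (cinner v v)"
  by (simp add: cinner_self)

lemma cinner_self_eq_0: "cinner v v = 0 \<longleftrightarrow> v = 0"
  by (simp add: cinner_self)

lemma cinner_self_norm_1: "norm v = 1 \<Longrightarrow> cinner v v = 1"
  by (simp add: cinner_self)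

lemma cinner_expand:
  "cinner (v + c *s w) (v + c *s w) = cinner v v + c * cinner v w + cnj c * cinner w v
     + cnj c * c * cinner w w"
  by (simp add: cinner_add_left cinner_add_right cinner_scale_left cinner_scale_right algebra_simps)

lemma norm_sum_mult_le:
  "cmod (\<Sum>i\<in>I. a i * b i) \<le> sqrt (\<Sum>i\<in>I. (cmod (a i))^2) * sqrt (\<Sum>i\<in>I. (cmod (b i))^2)"
proof -
  have "cmod (\<Sum>i\<in>I. a i * b i) \<le> (\<Sum>i\<in>I. \<bar>cmod (a i)\<bar> * \<bar>cmod (b i)\<bar>)"
    using norm_sum[of "\<lambda>i. a i * b i" I] by (simp add: norm_mult)
  also have "\<dots> \<le> L2_set (\<lambda>i. cmod (a i)) I * L2_set (\<lambda>i. cmod (b i)) I"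
    by (rule L2_set_mult_ineq)
  finally show ?thesis by (simp add: L2_set_def)
qed

lemma cinner_Cauchy_Schwarz: "cmod (cinner u v) \<le> norm u * norm v"
  using norm_sum_mult_le[of "\<lambda>i. cnj (u$i)" "\<lambda>i. v$i" UNIV]
  by (simp add: cinner_def norm_vec_def L2_set_def)

lemma norm_scale_vec: "norm (c *s (x::complex^'n)) = cmod c * norm x"
  by (simp add: norm_vec_def norm_mult L2_set_right_distrib)

lemma scaleR_eq_scale_vec: "r *\<^sub>R (x::complex^'n) = complex_of_real r *s x"
  by (simp add: vec_eq_iff) (simp add: scaleR_conv_of_real)

lemma Bessel_inequality:
  assumes "finite I"
    and orthonormal: "\<And>i j. i \<in> I \<Longrightarrow> j \<in> I \<Longrightarrow> cinner (e i) (e j) = (if i = j then 1 else 0)"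
  shows "(\<Sum>i\<in>I. (cmod (cinner (e i) x))^2) \<le> (norm x)^2"
proof -
  define a where "a i = cinner (e i) x" for i
  define p where "p = (\<Sum>i\<in>I. a i *s e i)"
  have coeff: "cinner (e j) p = a j" if "j \<in> I" for j
  proof -
    have "cinner (e j) p = (\<Sum>i\<in>I. if j = i then a i else 0)"
      unfolding p_def cinner_sum_right cinner_scale_right
      by (intro sum.cong refl) (simp add: orthonormal that)
    then show ?thesis using \<open>finite I\<close> that by simp
  qed
  have "cinner p (x - p) = 0"
    by (subst (1) p_def) (simp add: cinner_sum_left cinner_scale_left cinner_diff_right coeff a_def)
  then have "cinner x x = cinner (x - p) (x - p) + cinner p p"
    using cinner_eq_0_commute[of p "x - p"]
    by (simp add: cinner_diff_left cinner_diff_right algebra_simps)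
  moreover have "cinner p p = (\<Sum>i\<in>I. cnj (a i) * cinner (e i) p)"
    by (subst (1) p_def) (simp add: cinner_sum_left cinner_scale_left)
  also have "\<dots> = (\<Sum>i\<in>I. complex_of_real ((cmod (a i))^2))"
    by (intro sum.cong refl) (metis coeff complex_norm_square mult.commute)
  ultimately have "(norm x)^2 = (norm (x - p))^2 + (\<Sum>i\<in>I. (cmod (a i))^2)"
    by (simp add: power2_norm_eq_cinner Re_sum)
  then show ?thesis by (simp add: a_def)
qed

definition rank_one :: "complex \<Rightarrow> complex^'n \<Rightarrow> complex^'n \<Rightarrow> complex^'n^'n" where
  "rank_one c u v = (\<chi> i j. c * u$i * cnj (v$j))"

definition mat_scale :: "complex \<Rightarrow> complex^'n^'n \<Rightarrow> complex^'n^'n" where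
  "mat_scale c A = (\<chi> i j. c * A$i$j)"

lemma mat_scale_mat_scale: "mat_scale c (mat_scale d A) = mat_scale (c * d) A"
  by (simp add: mat_scale_def vec_eq_iff mult.assoc)

lemma mat_scale_add_left: "mat_scale (c + d) A = mat_scale c A + mat_scale d A"
  by (simp add: mat_scale_def vec_eq_iff distrib_right)

lemma mat_scale_add_right: "mat_scale c (A + B) = mat_scale c A + mat_scale c B"
  by (simp add: mat_scale_def vec_eq_iff distrib_left)

lemma mat_scale_diff_right: "mat_scale c (A - B) = mat_scale c A - mat_scale c B"
  by (simp add: mat_scale_def vec_eq_iff right_diff_distrib)

lemma mat_scale_sum: "mat_scale c (\<Sum>k\<in>K. M k) = (\<Sum>k\<in>K. mat_scale c (M k))"
  by (simp add: mat_scale_def vec_eq_iff sum_distrib_left)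

lemma mat_scale_minus_one: "mat_scale (-1) A = - A"
  by (simp add: mat_scale_def vec_eq_iff)

lemma scaleR_eq_mat_scale: "r *\<^sub>R (A::complex^'n^'n) = mat_scale (complex_of_real r) A"
  by (simp add: mat_scale_def vec_eq_iff) (simp add: scaleR_conv_of_real)

lemma trace_mat_scale: "trace (mat_scale c A) = c * trace A"
  by (simp add: trace_def mat_scale_def sum_distrib_left)

lemma sum_matrix_vector_mult: "(\<Sum>k\<in>K. (M k :: complex^'n^'n)) *v x = (\<Sum>k\<in>K. M k *v x)"
  by (simp add: vec_eq_iff matrix_vector_mult_def sum_distrib_right sum.swap[of _ K])

lemma matrix_vector_mult_sum: "A *v (\<Sum>k\<in>K. f k) = (\<Sum>k\<in>K. A *v f k)"
  by (simp add: vec_eq_iff matrix_vector_mult_def sum_distrib_left sum.swap[of _ K])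

lemma rank_one_mult_vector: "rank_one c u v *v x = (c * cinner v x) *s u"
  by (simp add: vec_eq_iff matrix_vector_mult_def rank_one_def cinner_def sum_distrib_left
      algebra_simps)

lemma trace_rank_one: "trace (rank_one c u v) = c * cinner v u"
  by (simp add: trace_def rank_one_def cinner_def sum_distrib_left ac_simps)

lemma mat_scale_rank_one: "mat_scale c (rank_one d u v) = rank_one (c * d) u v"
  by (simp add: mat_scale_def rank_one_def vec_eq_iff mult.assoc)

lemma rank_one_0 [simp]: "rank_one 0 u v = 0"
  by (simp add: rank_one_def vec_eq_iff)

lemma trace_sum: "trace (\<Sum>k\<in>K. (M k :: complex^'n^'n)) = (\<Sum>k\<in>K. trace (M k))"
  unfolding trace_def by (simp add: sum.swap[of _ K])

lemma mat_adj_mat_adj [simp]: "mat_adj (mat_adj A) = A"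
  by (simp add: mat_adj_def vec_eq_iff)

lemma mat_adj_sum: "mat_adj (\<Sum>k\<in>K. M k) = (\<Sum>k\<in>K. mat_adj (M k))"
  by (simp add: vec_eq_iff mat_adj_def)

lemma mat_adj_rank_one: "mat_adj (rank_one c u v) = rank_one (cnj c) v u"
  by (simp add: vec_eq_iff mat_adj_def rank_one_def ac_simps)

lemma quadratic_form_eq_cinner:
  "(\<Sum>i\<in>UNIV. \<Sum>j\<in>UNIV. cnj (v $ i) * A $ i $ j * v $ j) = cinner v (A *v v)"
  by (simp add: cinner_def matrix_vector_mult_def sum_distrib_left mult.assoc)

lemma psd_iff_cinner: "psd A \<longleftrightarrow> mat_adj A = A \<and> (\<forall>v. 0 \<le> Re (cinner v (A *v v)))"
  by (simp add: psd_def quadratic_form_eq_cinner)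

lemma cinner_matrix_vector_mult: "cinner x (A *v y) = cinner (mat_adj A *v x) y"
proof -
  have "cinner x (A *v y) = (\<Sum>i\<in>UNIV. \<Sum>j\<in>UNIV. cnj (x$i) * A$i$j * y$j)"
    by (simp add: cinner_def matrix_vector_mult_def sum_distrib_left mult.assoc)
  also have "\<dots> = (\<Sum>j\<in>UNIV. \<Sum>i\<in>UNIV. cnj (x$i) * A$i$j * y$j)"
    by (rule sum.swap)
  also have "\<dots> = cinner (mat_adj A *v x) y"
    by (simp add: cinner_def matrix_vector_mult_def mat_adj_def sum_distrib_right
        sum_distrib_left ac_simps)
  finally show ?thesis .
qed

lemma hermitian_cinner: "mat_adj H = H \<Longrightarrow> cinner x (H *v y) = cinner (H *v x) y"
  by (metis cinner_matrix_vector_mult)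

lemma hermitian_cinner_real:
  "mat_adj H = H \<Longrightarrow> cinner x (H *v x) = complex_of_real (Re (cinner x (H *v x)))"
  by (metis hermitian_cinner cinner_commute Reals_cnj_iff of_real_Re)

lemma hermitian_quadratic_expand:
  assumes "mat_adj H = H"
  shows "cinner (v + c *s w) (H *v (v + c *s w)) = cinner v (H *v v)
    + c * cnj (cinner w (H *v v)) + cnj c * cinner w (H *v v) + cnj c * c * cinner w (H *v w)"
proof -
  have "cinner v (H *v w) = cnj (cinner w (H *v v))"
    using hermitian_cinner[OF assms, of v w] cinner_commute by metis
  then show ?thesis
    by (simp add: matrix_vector_right_distrib vector_scalar_commute cinner_add_left
        cinner_add_right cinner_scale_left cinner_scale_right algebra_simps)
qed

lemma cinner_adj_mult_self: "cinner x ((mat_adj A ** A) *v y) = cinner (A *v x) (A *v y)"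
  using cinner_matrix_vector_mult[of x "mat_adj A" "A *v y"]
  by (simp add: matrix_vector_mul_assoc)

lemma matrix_eq_if_cinner_eq:
  assumes "\<And>x y. cinner x (A *v y) = cinner x (B *v y)"
  shows "A = B"
  unfolding matrix_eq
proof
  fix y
  have "cinner (A *v y - B *v y) (A *v y - B *v y) = 0"
    using assms by (simp add: cinner_diff_left cinner_diff_right)
  then show "A *v y = B *v y" by (simp add: cinner_self_eq_0)
qed

lemma hermitian_adj_mult_self: "mat_adj (mat_adj A ** A) = mat_adj A ** A"
proof (rule matrix_eq_if_cinner_eq)
  fix x y
  have "cinner x (mat_adj (mat_adj A ** A) *v y) = cnj (cinner y ((mat_adj A ** A) *v x))"
    using cinner_matrix_vector_mult[of x "mat_adj (mat_adj A ** A)" y] cinner_commute by simp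
  also have "\<dots> = cinner x ((mat_adj A ** A) *v y)"
    by (simp add: cinner_adj_mult_self cinner_commute[of "A *v y"])
  finally show "cinner x (mat_adj (mat_adj A ** A) *v y) = cinner x ((mat_adj A ** A) *v y)" .
qed

section \<open>The spectral theorem for Hermitian matrices\<close>

definition complex_subspace :: "(complex^'n) set \<Rightarrow> bool" where
  "complex_subspace S \<longleftrightarrow> 0 \<in> S \<and> (\<forall>x\<in>S. \<forall>y\<in>S. x + y \<in> S) \<and> (\<forall>c. \<forall>x\<in>S. c *s x \<in> S)"

lemma complex_subspace_imp_subspace: "complex_subspace S \<Longrightarrow> subspace S"
  unfolding complex_subspace_def subspace_def by (simp add: scaleR_eq_scale_vec)

lemma complex_subspace_add_scale:
  "complex_subspace S \<Longrightarrow> x \<in> S \<Longrightarrow> y \<in> S \<Longrightarrow> x + c *s y \<in> S"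
  unfolding complex_subspace_def by blast

lemma complex_subspace_diff_scale:
  assumes "complex_subspace S" "x \<in> S" "y \<in> S"
  shows "x - c *s y \<in> S"
  using complex_subspace_add_scale[OF assms, of "- c"] by (simp add: vector_smult_lneg)

text \<open>Compare with the perturbation \<open>c = t \<langle>w, H v\<rangle>\<close> for small \<open>t > 0\<close>.\<close>

lemma hermitian_max_perturbation:
  assumes H: "mat_adj H = H" and v: "cinner v v = 1" and w: "cinner v w = 0"
    and max: "\<And>c. Re (cinner (v + c *s w) (H *v (v + c *s w)))
                     \<le> Re (cinner v (H *v v)) * (norm (v + c *s w))^2"
  shows "cinner w (H *v v) = 0"
proof -
  define q where "q x = Re (cinner x (H *v x))" for x
  define a where "a = cinner w (H *v v)"
  define K where "K = q w - q v * (norm w)^2"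
  define t where "t = 1 / (\<bar>K\<bar> + 1)"
  define \<alpha> where "\<alpha> = (cmod a)^2"
  define c where "c = complex_of_real t * a"
  have t_pos: "t > 0" by (simp add: t_def add_pos_nonneg)
  have tK: "t * K > -2"
  proof -
    have "t * \<bar>K\<bar> \<le> 1" by (simp add: t_def field_simps)
    moreover have "t * (-\<bar>K\<bar>) \<le> t * K" using t_pos by (intro mult_left_mono) auto
    ultimately show ?thesis by linarith
  qed
  have a_cnj: "cnj a * a = complex_of_real \<alpha>" "a * cnj a = complex_of_real \<alpha>"
    unfolding \<alpha>_def complex_norm_square by (simp_all add: mult.commute)
  have cc: "c * cnj a = complex_of_real (t * \<alpha>)" "cnj c * a = complex_of_real (t * \<alpha>)"
    "cnj c * c = complex_of_real (t^2 * \<alpha>)"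
    unfolding c_def using a_cnj by (simp_all add: power2_eq_square ac_simps)
  have qv: "cinner v (H *v v) = complex_of_real (q v)"
    and qw: "cinner w (H *v w) = complex_of_real (q w)"
    using hermitian_cinner_real[OF H] by (simp_all add: q_def)
  have "q (v + c *s w) \<le> q v * (norm (v + c *s w))^2"
    using max[of c] unfolding q_def .
  moreover have "q (v + c *s w) = q v + 2 * t * \<alpha> + t^2 * \<alpha> * q w"
    using hermitian_quadratic_expand[OF H, of v c w]
    unfolding a_def[symmetric] cc qv qw by (simp add: q_def)
  moreover have "(norm (v + c *s w))^2 = 1 + t^2 * \<alpha> * (norm w)^2"
    using w cinner_eq_0_commute[of v w]
    by (simp add: power2_norm_eq_cinner cinner_expand cc v)
  ultimately have "t * (\<alpha> * (2 + t * K)) \<le> 0"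
    by (simp add: K_def algebra_simps power2_eq_square)
  with t_pos tK have "\<alpha> \<le> 0" by (simp add: mult_le_0_iff)
  then show ?thesis by (simp add: \<alpha>_def a_def)
qed

lemma hermitian_eigenvector_exists:
  assumes H: "mat_adj H = H" and S: "complex_subspace S" and invariant: "\<forall>x\<in>S. H *v x \<in> S"
    and "x0 \<in> S" "x0 \<noteq> 0"
  shows "\<exists>v\<in>S. norm v = 1 \<and> H *v v = cinner v (H *v v) *s v"
proof -
  define q where "q x = Re (cinner x (H *v x))" for x
  have sub: "subspace S" using complex_subspace_imp_subspace[OF S] .
  have "compact (S \<inter> sphere 0 1)"
    using closed_subspace[OF sub] compact_sphere closed_Int_compact by blast
  moreover have "(1 / norm x0) *\<^sub>R x0 \<in> S \<inter> sphere 0 1"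
    using assms(4,5) sub by (simp add: subspace_scale)
  then have "S \<inter> sphere 0 1 \<noteq> {}" by blast
  moreover have "continuous_on (S \<inter> sphere 0 1) q"
    unfolding q_def cinner_def matrix_vector_mult_def
    by (intro continuous_intros linear_continuous_on bounded_linear_vec_nth)
  ultimately obtain v where "v \<in> S \<inter> sphere 0 1" and max_v: "\<forall>y\<in>S \<inter> sphere 0 1. q y \<le> q v"
    using continuous_attains_sup by blast
  then have v: "v \<in> S" "norm v = 1" by auto
  have vv: "cinner v v = 1" using cinner_self_norm_1[OF v(2)] .
  have rayleigh: "q y \<le> q v * (norm y)^2" if "y \<in> S" for y
  proof (cases "y = 0")
    case False
    define c where "c = complex_of_real (1 / norm y)"
    have "c *s y = (1 / norm y) *\<^sub>R y" by (simp add: c_def scaleR_eq_scale_vec)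
    then have "q (c *s y) \<le> q v" using max_v that False sub by (simp add: subspace_scale)
    moreover have "q (c *s y) = q y / (norm y)^2"
      by (simp add: q_def c_def vector_scalar_commute cinner_scale_left cinner_scale_right
          power2_eq_square)
    ultimately show ?thesis using False by (simp add: field_simps)
  qed (simp add: q_def)
  define w where "w = H *v v - cinner v (H *v v) *s v"
  have w: "w \<in> S" "cinner v w = 0"
    using complex_subspace_diff_scale[OF S] invariant v(1)
    by (auto simp: w_def cinner_diff_right cinner_scale_right vv)
  have "cinner w (H *v v) = 0"
    using hermitian_max_perturbation[OF H vv w(2)] rayleigh
      complex_subspace_add_scale[OF S v(1) w(1)]
    by (simp add: q_def)
  moreover have "cinner w v = 0" using w(2) cinner_eq_0_commute by blast
  ultimately have "cinner w w = 0"
    by (simp add: w_def cinner_diff_right cinner_scale_right)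
  then show ?thesis using v by (auto simp: cinner_self_eq_0 w_def)
qed

lemma eigenvector_orthogonal_complement:
  assumes H: "mat_adj H = H" and S: "complex_subspace S" and invariant: "\<forall>x\<in>S. H *v x \<in> S"
    and v: "v \<in> S" "cinner v v = 1" "H *v v = \<mu> *s v"
  defines "S' \<equiv> {x\<in>S. cinner v x = 0}"
  shows "complex_subspace S'" "\<forall>x\<in>S'. H *v x \<in> S'" "dim S' < dim S"
proof -
  show S': "complex_subspace S'"
    using S unfolding complex_subspace_def S'_def
    by (auto simp: cinner_add_right cinner_scale_right)
  show "\<forall>x\<in>S'. H *v x \<in> S'"
    using invariant hermitian_cinner[OF H, of v] v(3)
    by (auto simp: S'_def cinner_scale_left)
  have "v \<notin> S'" using v(2) by (simp add: S'_def)
  then have "S' \<subset> S" using v(1) by (auto simp: S'_def)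
  moreover have "span S' = S'" "span S = S"
    using S S' complex_subspace_imp_subspace by (auto simp: span_eq_iff)
  ultimately show "dim S' < dim S" by (metis dim_psubset)
qed

lemma hermitian_eigenbasis_subspace:
  assumes H: "mat_adj H = H"
  shows "complex_subspace S \<Longrightarrow> \<forall>x\<in>S. H *v x \<in> S \<Longrightarrow> \<exists>B. finite B \<and> B \<subseteq> S \<and>
    (\<forall>b\<in>B. norm b = 1 \<and> H *v b = cinner b (H *v b) *s b) \<and>
    (\<forall>b\<in>B. \<forall>c\<in>B. b \<noteq> c \<longrightarrow> cinner b c = 0) \<and> (\<forall>x\<in>S. x = (\<Sum>b\<in>B. cinner b x *s b))"
proof (induction "dim S" arbitrary: S rule: less_induct)
  case less
  show ?case
  proof (cases "\<exists>x0\<in>S. x0 \<noteq> 0")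
    case False
    then show ?thesis by (intro exI[of _ "{}"]) auto
  next
    case True
    then obtain v where v: "v \<in> S" "norm v = 1" and ev: "H *v v = cinner v (H *v v) *s v"
      using hermitian_eigenvector_exists[OF H less.prems] by blast
    have vv: "cinner v v = 1" using cinner_self_norm_1[OF v(2)] .
    define S' where "S' = {x\<in>S. cinner v x = 0}"
    note S' = eigenvector_orthogonal_complement[OF H less.prems v(1) vv ev, folded S'_def]
    obtain B where B: "finite B" "B \<subseteq> S'"
      "\<forall>b\<in>B. norm b = 1 \<and> H *v b = cinner b (H *v b) *s b"
      "\<forall>b\<in>B. \<forall>c\<in>B. b \<noteq> c \<longrightarrow> cinner b c = 0" "\<forall>x\<in>S'. x = (\<Sum>b\<in>B. cinner b x *s b)"
      using less.hyps[OF S'(3) S'(1,2)] by blast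
    have orth: "cinner v b = 0" "cinner b v = 0" if "b \<in> B" for b
      using that B(2) cinner_eq_0_commute by (auto simp: S'_def)
    have "v \<notin> B" using orth vv by fastforce
    have "x = (\<Sum>b\<in>insert v B. cinner b x *s b)" if x: "x \<in> S" for x
    proof -
      have "x - cinner v x *s v \<in> S'"
        using complex_subspace_diff_scale[OF less.prems(1) x v(1)]
        by (simp add: S'_def cinner_diff_right cinner_scale_right vv)
      then have "x - cinner v x *s v = (\<Sum>b\<in>B. cinner b (x - cinner v x *s v) *s b)"
        using B(5) by blast
      also have "\<dots> = (\<Sum>b\<in>B. cinner b x *s b)"
        by (intro sum.cong refl) (simp add: cinner_diff_right cinner_scale_right orth)
      finally show ?thesis using B(1) \<open>v \<notin> B\<close> by (simp add: diff_eq_eq add.commute)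
    qed
    moreover have "insert v B \<subseteq> S" using v(1) B(2) by (auto simp: S'_def)
    ultimately show ?thesis
      using B(1,3,4) v ev orth by (intro exI[of _ "insert v B"]) auto
  qed
qed

definition orthonormal_basis :: "(complex^'n) set \<Rightarrow> bool" where
  "orthonormal_basis B \<longleftrightarrow> finite B \<and> (\<forall>b\<in>B. norm b = 1)
     \<and> (\<forall>b\<in>B. \<forall>c\<in>B. b \<noteq> c \<longrightarrow> cinner b c = 0) \<and> (\<forall>x. x = (\<Sum>b\<in>B. cinner b x *s b))"

lemma orthonormal_basis_finite: "orthonormal_basis B \<Longrightarrow> finite B"
  by (simp add: orthonormal_basis_def)

lemma orthonormal_basis_norm: "orthonormal_basis B \<Longrightarrow> b \<in> B \<Longrightarrow> norm b = 1"
  by (simp add: orthonormal_basis_def)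

lemma orthonormal_basis_expansion: "orthonormal_basis B \<Longrightarrow> x = (\<Sum>b\<in>B. cinner b x *s b)"
  unfolding orthonormal_basis_def by blast

lemma orthonormal_basis_cinner:
  "orthonormal_basis B \<Longrightarrow> b \<in> B \<Longrightarrow> c \<in> B \<Longrightarrow> cinner b c = (if b = c then 1 else 0)"
  unfolding orthonormal_basis_def using cinner_self_norm_1 by auto

lemma matrix_vector_mult_expansion:
  "orthonormal_basis B \<Longrightarrow> A *v x = (\<Sum>b\<in>B. cinner b x *s (A *v b))"
  by (subst orthonormal_basis_expansion[of B x])
    (simp_all add: matrix_vector_mult_sum vector_scalar_commute)

lemma matrix_eq_on_basis:
  assumes "orthonormal_basis B" and "\<And>b. b \<in> B \<Longrightarrow> A *v b = A' *v b"
  shows "A = A'"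
  unfolding matrix_eq
proof
  fix x
  show "A *v x = A' *v x"
    using matrix_vector_mult_expansion[OF assms(1), of A x]
      matrix_vector_mult_expansion[OF assms(1), of A' x] assms(2) by simp
qed

lemma sum_rank_one_mult_basis:
  assumes "orthonormal_basis B" and "b \<in> B"
  shows "(\<Sum>b'\<in>B. rank_one (c b') (u b') b') *v b = c b *s u b"
proof -
  have "(\<Sum>b'\<in>B. rank_one (c b') (u b') b') *v b = (\<Sum>b'\<in>B. if b' = b then c b *s u b else 0)"
    unfolding sum_matrix_vector_mult rank_one_mult_vector
    by (intro sum.cong refl) (simp add: orthonormal_basis_cinner[OF assms(1) _ assms(2)])
  also have "\<dots> = c b *s u b"
    using assms by (simp add: orthonormal_basis_finite)
  finally show ?thesis .
qed

lemma hermitian_eigenbasis: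
  assumes H: "mat_adj H = H"
  obtains B \<mu> where "orthonormal_basis B" "\<And>b. b \<in> B \<Longrightarrow> H *v b = complex_of_real (\<mu> b) *s b"
proof -
  obtain B where B: "finite B" "\<forall>b\<in>B. norm b = 1 \<and> H *v b = cinner b (H *v b) *s b"
    "\<forall>b\<in>B. \<forall>c\<in>B. b \<noteq> c \<longrightarrow> cinner b c = 0" "\<forall>x. x = (\<Sum>b\<in>B. cinner b x *s b)"
    using hermitian_eigenbasis_subspace[OF H, of UNIV] by (auto simp: complex_subspace_def)
  then have "orthonormal_basis B" by (simp add: orthonormal_basis_def)
  moreover have "H *v b = complex_of_real (Re (cinner b (H *v b))) *s b" if "b \<in> B" for b
    using B(2) that hermitian_cinner_real[OF H, of b] by metis
  ultimately show ?thesis by (intro that[of B "\<lambda>b. Re (cinner b (H *v b))"]) auto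
qed

lemma psd_eigenvalue_nonneg:
  assumes "psd H" "norm b = 1" "H *v b = complex_of_real \<mu> *s b"
  shows "\<mu> \<ge> 0"
  using assms cinner_self_norm_1[of b]
  by (auto simp: psd_iff_cinner cinner_scale_right dest: spec[of _ b])

section \<open>Square roots and the absolute value\<close>

lemma psd_adj_mult_self: "psd (mat_adj A ** A)"
  by (simp add: psd_iff_cinner hermitian_adj_mult_self cinner_adj_mult_self cinner_self)

lemma psd_sum_rank_one:
  assumes "\<And>b. b \<in> B \<Longrightarrow> c b \<ge> 0"
  shows "psd (\<Sum>b\<in>B. rank_one (complex_of_real (c b)) b b)"
proof -
  have "Re (cinner v ((\<Sum>b\<in>B. rank_one (complex_of_real (c b)) b b) *v v))
      = (\<Sum>b\<in>B. c b * (cmod (cinner b v))^2)" for v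
  proof -
    have "cinner v ((\<Sum>b\<in>B. rank_one (complex_of_real (c b)) b b) *v v)
        = (\<Sum>b\<in>B. complex_of_real (c b) * (cinner b v * cnj (cinner b v)))"
      by (simp add: sum_matrix_vector_mult rank_one_mult_vector cinner_sum_right
          cinner_scale_right cinner_commute[of v] ac_simps)
    then show ?thesis by (simp add: Re_sum flip: complex_norm_square)
  qed
  then show ?thesis
    using assms unfolding psd_iff_cinner
    by (auto simp: mat_adj_sum mat_adj_rank_one intro!: sum_nonneg)
qed

lemma psd_sqrt_eigenvector:
  assumes Q: "psd Q" and QQb: "Q *v (Q *v b) = complex_of_real (\<mu>^2) *s b" and "\<mu> \<ge> 0"
  shows "Q *v b = complex_of_real \<mu> *s b"
proof (cases "\<mu> = 0")
  case True
  have hQ: "mat_adj Q = Q" using Q by (simp add: psd_iff_cinner)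
  have "cinner (Q *v b) (Q *v b) = cinner b (Q *v (Q *v b))"
    using hermitian_cinner[OF hQ, of b "Q *v b"] by simp
  then show ?thesis using QQb True by (simp add: cinner_self_eq_0)
next
  case False
  define w where "w = Q *v b - complex_of_real \<mu> *s b"
  have "Q *v w = (- complex_of_real \<mu>) *s w"
    by (simp add: w_def matrix_vector_mult_diff_distrib vector_scalar_commute QQb vec_eq_iff
        algebra_simps power2_eq_square)
  then have "Re (cinner w (Q *v w)) = - \<mu> * (norm w)^2"
    by (simp only: cinner_scale_right cinner_self) simp
  then have "\<mu> * (norm w)^2 \<le> 0" using Q by (auto simp: psd_iff_cinner dest: spec[of _ w])
  then have "w = 0" using False \<open>\<mu> \<ge> 0\<close> by (simp add: mult_le_0_iff)
  then show ?thesis by (simp add: w_def)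
qed

lemma psd_sqrt_unique:
  assumes P: "psd P" and Q: "psd Q" and "Q ** Q = P ** P"
  shows "Q = P"
proof -
  obtain B \<mu> where B: "orthonormal_basis B"
    and Pb: "\<And>b. b \<in> B \<Longrightarrow> P *v b = complex_of_real (\<mu> b) *s b"
    using hermitian_eigenbasis P by (metis psd_iff_cinner)
  show ?thesis
  proof (rule matrix_eq_on_basis[OF B])
    fix b assume b: "b \<in> B"
    have "\<mu> b \<ge> 0" using psd_eigenvalue_nonneg[OF P orthonormal_basis_norm[OF B b] Pb[OF b]] .
    moreover have "Q *v (Q *v b) = P *v (P *v b)"
      using \<open>Q ** Q = P ** P\<close> by (simp add: matrix_vector_mul_assoc)
    then have "Q *v (Q *v b) = complex_of_real ((\<mu> b)^2) *s b"
      using Pb[OF b] by (simp add: vector_scalar_commute power2_eq_square)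
    ultimately show "Q *v b = P *v b" using psd_sqrt_eigenvector[OF Q] Pb[OF b] by metis
  qed
qed

lemma mat_abs_decomposition:
  fixes A :: "complex^'n^'n"
  obtains B ev where "orthonormal_basis B" "\<And>b. b \<in> B \<Longrightarrow> ev b \<ge> 0"
    "\<And>b. b \<in> B \<Longrightarrow> (mat_adj A ** A) *v b = complex_of_real (ev b) *s b"
    "mat_abs A = (\<Sum>b\<in>B. rank_one (complex_of_real (sqrt (ev b))) b b)"
proof -
  let ?H = "mat_adj A ** A"
  obtain B ev where B: "orthonormal_basis B"
    and Hb: "\<And>b. b \<in> B \<Longrightarrow> ?H *v b = complex_of_real (ev b) *s b"
    using hermitian_eigenbasis[OF hermitian_adj_mult_self] by metis
  have ev_nonneg: "ev b \<ge> 0" if "b \<in> B" for b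
    using psd_adj_mult_self orthonormal_basis_norm[OF B that] Hb[OF that]
    by (rule psd_eigenvalue_nonneg)
  define P where "P = (\<Sum>b\<in>B. rank_one (complex_of_real (sqrt (ev b))) b b)"
  have Pb: "P *v b = complex_of_real (sqrt (ev b)) *s b" if "b \<in> B" for b
    unfolding P_def using sum_rank_one_mult_basis[OF B that, where u = id] by simp
  have psd_P: "psd P"
    unfolding P_def using ev_nonneg by (intro psd_sum_rank_one) simp
  moreover have PP: "P ** P = ?H"
  proof (rule matrix_eq_on_basis[OF B])
    fix b assume b: "b \<in> B"
    have "(P ** P) *v b = complex_of_real (sqrt (ev b)) * complex_of_real (sqrt (ev b)) *s b"
      by (simp add: Pb[OF b] vector_scalar_commute flip: matrix_vector_mul_assoc)
    also have "\<dots> = ?H *v b"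
      using ev_nonneg[OF b] by (simp only: Hb[OF b] flip: of_real_mult) simp
    finally show "(P ** P) *v b = ?H *v b" .
  qed
  ultimately have "mat_abs A = P"
    unfolding mat_abs_def by (intro the_equality) (auto intro: psd_sqrt_unique)
  then show ?thesis using that[OF B ev_nonneg Hb] P_def by blast
qed

lemma mat_abs_psd: "psd A \<Longrightarrow> mat_abs A = A"
  unfolding mat_abs_def using psd_sqrt_unique
  by (intro the_equality) (auto simp: psd_iff_cinner)

section \<open>The trace norm\<close>

lemma singular_value_decomposition_orthonormal:
  fixes A :: "complex^'n^'n"
  obtains B s u where "orthonormal_basis B" "\<And>b. b \<in> B \<Longrightarrow> s b \<ge> 0"
    "\<And>b. b \<in> B \<Longrightarrow> norm (u b) = 1"
    "A = (\<Sum>b\<in>B. rank_one (complex_of_real (s b)) (u b) b)"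
    "trace_norm A = (\<Sum>b\<in>B. s b)"
    "\<And>b c. b \<in> B \<Longrightarrow> c \<in> B \<Longrightarrow> s b > 0 \<Longrightarrow> s c > 0 \<Longrightarrow>
       cinner (u b) (u c) = (if b = c then 1 else 0)"
proof -
  obtain B ev where B: "orthonormal_basis B" and ev_nonneg: "\<And>b. b \<in> B \<Longrightarrow> ev b \<ge> 0"
    and Hb: "\<And>b. b \<in> B \<Longrightarrow> (mat_adj A ** A) *v b = complex_of_real (ev b) *s b"
    and abs_A: "mat_abs A = (\<Sum>b\<in>B. rank_one (complex_of_real (sqrt (ev b))) b b)"
    using mat_abs_decomposition by blast
  define s where "s b = sqrt (ev b)" for b
  define u where "u b = (if s b = 0 then b else complex_of_real (1 / s b) *s (A *v b))" for b
  have AA: "cinner (A *v b) (A *v c) = complex_of_real (ev c) * cinner b c" if "c \<in> B" for b c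
    using cinner_adj_mult_self[of b A c] Hb[OF that] by (simp add: cinner_scale_right)
  have norm_Ab: "norm (A *v b) = s b" if b: "b \<in> B" for b
  proof -
    have "cinner (A *v b) (A *v b) = complex_of_real (ev b)"
      using AA[OF b, of b] orthonormal_basis_cinner[OF B b b] by simp
    then have "(norm (A *v b))^2 = ev b" by (simp add: power2_norm_eq_cinner)
    then show ?thesis unfolding s_def by (metis norm_ge_zero real_sqrt_unique)
  qed
  have Ab: "A *v b = complex_of_real (s b) *s u b" if "b \<in> B" for b
    using norm_Ab[OF that] by (auto simp: u_def vec_eq_iff)
  have norm_u: "norm (u b) = 1" if b: "b \<in> B" for b
    using orthonormal_basis_norm[OF B b] norm_Ab[OF b] ev_nonneg[OF b]
    by (simp add: u_def s_def norm_scale_vec norm_divide)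
  have decomp: "A = (\<Sum>b\<in>B. rank_one (complex_of_real (s b)) (u b) b)"
    using B Ab by (intro matrix_eq_on_basis[OF B]) (simp add: sum_rank_one_mult_basis)
  have tn: "trace_norm A = (\<Sum>b\<in>B. s b)"
    using orthonormal_basis_cinner[OF B]
    by (simp add: trace_norm_def abs_A trace_sum trace_rank_one s_def Re_sum)
  have orth: "cinner (u b) (u c) = (if b = c then 1 else 0)"
    if b: "b \<in> B" and c: "c \<in> B" and "s b > 0" "s c > 0" for b c
  proof -
    have "ev c = (s c)^2" using ev_nonneg[OF c] by (simp add: s_def)
    then have "cinner (u b) (u c) = complex_of_real (1 / s b) * complex_of_real (s c) * cinner b c"
      using that AA[OF c, of b]
      by (simp add: u_def cinner_scale_left cinner_scale_right power2_eq_square)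
    then show ?thesis using that by (simp add: orthonormal_basis_cinner[OF B])
  qed
  show ?thesis by (rule that[OF B _ norm_u decomp tn orth]) (simp add: s_def ev_nonneg)
qed

lemma singular_value_decomposition:
  fixes A :: "complex^'n^'n"
  obtains B s u where "orthonormal_basis B" "\<And>b. b \<in> B \<Longrightarrow> s b \<ge> 0"
    "\<And>b. b \<in> B \<Longrightarrow> norm (u b) = 1"
    "A = (\<Sum>b\<in>B. rank_one (complex_of_real (s b)) (u b) b)"
    "trace_norm A = (\<Sum>b\<in>B. s b)"
  by (rule singular_value_decomposition_orthonormal[of A]) (rule that)

lemma norm_sum_cinner_mult_le:
  assumes "finite I"
    and e: "\<And>i j. i \<in> I \<Longrightarrow> j \<in> I \<Longrightarrow> cinner (e i) (e j) = (if i = j then 1 else 0)"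
    and f: "\<And>i j. i \<in> I \<Longrightarrow> j \<in> I \<Longrightarrow> cinner (f i) (f j) = (if i = j then 1 else 0)"
  shows "cmod (\<Sum>i\<in>I. cinner y (e i) * cinner (f i) x) \<le> norm y * norm x"
proof -
  have "(\<Sum>i\<in>I. (cmod (cinner y (e i)))^2) = (\<Sum>i\<in>I. (cmod (cinner (e i) y))^2)"
    by (intro sum.cong refl) (subst cinner_commute, simp)
  then have "(\<Sum>i\<in>I. (cmod (cinner y (e i)))^2) \<le> (norm y)^2"
    using Bessel_inequality[OF assms(1) e] by simp
  moreover have "(\<Sum>i\<in>I. (cmod (cinner (f i) x))^2) \<le> (norm x)^2"
    using Bessel_inequality[OF assms(1) f] .
  ultimately have "sqrt (\<Sum>i\<in>I. (cmod (cinner y (e i)))^2) * sqrt (\<Sum>i\<in>I. (cmod (cinner (f i) x))^2)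
      \<le> norm y * norm x"
    by (intro mult_mono) (auto intro: real_le_lsqrt simp: sum_nonneg)
  with norm_sum_mult_le show ?thesis by (rule order_trans)
qed

lemma trace_norm_le_sum_rank_one:
  fixes A :: "complex^'n^'n"
  assumes "finite K" and "\<And>k. k \<in> K \<Longrightarrow> norm (x k) \<le> 1" and "\<And>k. k \<in> K \<Longrightarrow> norm (y k) \<le> 1"
    and A: "A = (\<Sum>k\<in>K. rank_one (c k) (x k) (y k))"
  shows "trace_norm A \<le> (\<Sum>k\<in>K. cmod (c k))"
proof -
  obtain B s u where B: "orthonormal_basis B" and s_nonneg: "\<And>b. b \<in> B \<Longrightarrow> s b \<ge> 0"
    and norm_u: "\<And>b. b \<in> B \<Longrightarrow> norm (u b) = 1"
    and decomp: "A = (\<Sum>b\<in>B. rank_one (complex_of_real (s b)) (u b) b)"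
    and tn: "trace_norm A = (\<Sum>b\<in>B. s b)"
    and orth: "\<And>b c. b \<in> B \<Longrightarrow> c \<in> B \<Longrightarrow> s b > 0 \<Longrightarrow> s c > 0 \<Longrightarrow>
      cinner (u b) (u c) = (if b = c then 1 else 0)"
    by (rule singular_value_decomposition_orthonormal[of A]) (rule that)
  define B' where "B' = {b\<in>B. s b > 0}"
  have "finite B'" using orthonormal_basis_finite[OF B] by (simp add: B'_def)
  have "trace_norm A = (\<Sum>b\<in>B'. s b)"
    unfolding tn B'_def using orthonormal_basis_finite[OF B] s_nonneg
    by (intro sum.mono_neutral_right) (auto simp: less_le)
  define T where "T k = (\<Sum>b\<in>B'. cinner (y k) b * cinner (u b) (x k))" for k
  have "complex_of_real (s b) = (\<Sum>k\<in>K. c k * (cinner (y k) b * cinner (u b) (x k)))"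
    if "b \<in> B'" for b
  proof -
    have "b \<in> B" using that by (simp add: B'_def)
    then have "cinner (u b) (A *v b) = complex_of_real (s b)"
      using decomp sum_rank_one_mult_basis[OF B] cinner_self_norm_1[OF norm_u]
      by (simp add: cinner_scale_right)
    then show ?thesis
      by (simp add: A sum_matrix_vector_mult rank_one_mult_vector cinner_sum_right
          cinner_scale_right ac_simps)
  qed
  then have tn_eq: "complex_of_real (trace_norm A) = (\<Sum>k\<in>K. c k * T k)"
    unfolding \<open>trace_norm A = (\<Sum>b\<in>B'. s b)\<close> of_real_sum T_def sum_distrib_left
    by (simp add: sum.swap[of _ K])
  have T_le_1: "cmod (T k) \<le> 1" if "k \<in> K" for k
  proof -
    have "cmod (T k) \<le> norm (y k) * norm (x k)"
      unfolding T_def using \<open>finite B'\<close>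
      by (intro norm_sum_cinner_mult_le) (auto simp: B'_def orthonormal_basis_cinner[OF B] orth)
    also have "\<dots> \<le> 1" using assms(2,3)[OF that] by (simp add: mult_le_one)
    finally show ?thesis .
  qed
  have "trace_norm A \<ge> 0" using s_nonneg by (simp add: tn sum_nonneg)
  then have "trace_norm A = cmod (\<Sum>k\<in>K. c k * T k)"
    by (simp flip: tn_eq)
  also have "\<dots> \<le> (\<Sum>k\<in>K. cmod (c k) * cmod (T k))"
    using norm_sum[of "\<lambda>k. c k * T k" K] by (simp add: norm_mult)
  also have "\<dots> \<le> (\<Sum>k\<in>K. cmod (c k))"
    using T_le_1 by (intro sum_mono) (simp add: mult_left_le)
  finally show ?thesis .
qed

lemma trace_norm_nonneg: "trace_norm A \<ge> 0"
proof -
  obtain B s u where "orthonormal_basis B" and "\<And>b. b \<in> B \<Longrightarrow> s b \<ge> 0"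
    and "\<And>b. b \<in> B \<Longrightarrow> norm (u b) = 1"
    and "A = (\<Sum>b\<in>B. rank_one (complex_of_real (s b)) (u b) b)"
    and "trace_norm A = (\<Sum>b\<in>B. s b)"
    by (rule singular_value_decomposition[of A]) (rule that)
  then show ?thesis by (simp add: sum_nonneg)
qed

lemma trace_norm_eq_0_iff: "trace_norm A = 0 \<longleftrightarrow> A = 0"
proof
  assume "trace_norm A = 0"
  obtain B s u where B: "orthonormal_basis B" and "\<And>b. b \<in> B \<Longrightarrow> s b \<ge> 0"
    and "\<And>b. b \<in> B \<Longrightarrow> norm (u b) = 1"
    and "A = (\<Sum>b\<in>B. rank_one (complex_of_real (s b)) (u b) b)"
    and "trace_norm A = (\<Sum>b\<in>B. s b)"
    by (rule singular_value_decomposition[of A]) (rule that)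
  with \<open>trace_norm A = 0\<close> show "A = 0"
    using orthonormal_basis_finite[OF B] by (simp add: sum_nonneg_eq_0_iff)
next
  assume "A = 0"
  then show "trace_norm A = 0"
    using trace_norm_le_sum_rank_one[where K = "{}" and A = A] trace_norm_nonneg[of A] by simp
qed

lemma trace_norm_0 [simp]: "trace_norm 0 = 0"
  by (simp add: trace_norm_eq_0_iff)

lemma trace_norm_pos: "A \<noteq> 0 \<Longrightarrow> trace_norm A > 0"
  using trace_norm_nonneg[of A] trace_norm_eq_0_iff[of A] by linarith

lemma trace_norm_mat_scale: "trace_norm (mat_scale c A) \<le> cmod c * trace_norm A"
proof -
  obtain B s u where B: "orthonormal_basis B" and s: "\<And>b. b \<in> B \<Longrightarrow> s b \<ge> 0"
    and u: "\<And>b. b \<in> B \<Longrightarrow> norm (u b) = 1"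
    and A: "A = (\<Sum>b\<in>B. rank_one (complex_of_real (s b)) (u b) b)"
    and tn: "trace_norm A = (\<Sum>b\<in>B. s b)"
    by (rule singular_value_decomposition[of A]) (rule that)
  have "mat_scale c A = (\<Sum>b\<in>B. rank_one (c * complex_of_real (s b)) (u b) b)"
    by (simp add: A mat_scale_sum mat_scale_rank_one)
  then have "trace_norm (mat_scale c A) \<le> (\<Sum>b\<in>B. cmod (c * complex_of_real (s b)))"
    using orthonormal_basis_finite[OF B] u orthonormal_basis_norm[OF B]
    by (intro trace_norm_le_sum_rank_one) auto
  also have "\<dots> = cmod c * trace_norm A"
    using s by (simp add: tn norm_mult sum_distrib_left)
  finally show ?thesis .
qed

lemma trace_norm_triangle:
  fixes A A' :: "complex^'n^'n"
  shows "trace_norm (A + A') \<le> trace_norm A + trace_norm A'"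
proof -
  obtain B s u where B: "orthonormal_basis B" and s: "\<And>b. b \<in> B \<Longrightarrow> s b \<ge> 0"
    and u: "\<And>b. b \<in> B \<Longrightarrow> norm (u b) = 1"
    and A: "A = (\<Sum>b\<in>B. rank_one (complex_of_real (s b)) (u b) b)"
    and tn: "trace_norm A = (\<Sum>b\<in>B. s b)"
    by (rule singular_value_decomposition[of A]) (rule that)
  obtain B' s' u' where B': "orthonormal_basis B'" and s': "\<And>b. b \<in> B' \<Longrightarrow> s' b \<ge> 0"
    and u': "\<And>b. b \<in> B' \<Longrightarrow> norm (u' b) = 1"
    and A': "A' = (\<Sum>b\<in>B'. rank_one (complex_of_real (s' b)) (u' b) b)"
    and tn': "trace_norm A' = (\<Sum>b\<in>B'. s' b)"
    by (rule singular_value_decomposition[of A']) (rule that)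
  have fin: "finite B" "finite B'" using B B' orthonormal_basis_finite by auto
  define c where "c = case_sum (\<lambda>b. complex_of_real (s b)) (\<lambda>b. complex_of_real (s' b))"
  define x where "x = case_sum u u'"
  define y where "y = case_sum (\<lambda>b::complex^'n. b) (\<lambda>b. b)"
  have "A + A' = (\<Sum>k\<in>B <+> B'. rank_one (c k) (x k) (y k))"
    using fin by (simp add: sum.Plus A A' c_def x_def y_def o_def)
  then have "trace_norm (A + A') \<le> (\<Sum>k\<in>B <+> B'. cmod (c k))"
    using fin u u' orthonormal_basis_norm[OF B] orthonormal_basis_norm[OF B']
    by (intro trace_norm_le_sum_rank_one) (auto simp: x_def y_def)
  also have "\<dots> = trace_norm A + trace_norm A'"
    using fin s s' by (simp add: sum.Plus c_def o_def tn tn')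
  finally show ?thesis .
qed

lemma trace_norm_diff: "trace_norm (A - A') \<le> trace_norm A + trace_norm A'"
  using trace_norm_triangle[of A "- A'"] trace_norm_mat_scale[of "-1" A']
  by (simp add: mat_scale_minus_one)

lemma trace_norm_sum: "trace_norm (\<Sum>k\<in>K. M k) \<le> (\<Sum>k\<in>K. trace_norm (M k))"
proof (induction K rule: infinite_finite_induct)
  case (insert k K)
  then show ?case using trace_norm_triangle[of "M k" "sum M K"] by simp
qed simp_all

lemma norm_trace_le_trace_norm: "cmod (trace A) \<le> trace_norm A"
proof -
  obtain B s u where B: "orthonormal_basis B" and s: "\<And>b. b \<in> B \<Longrightarrow> s b \<ge> 0"
    and u: "\<And>b. b \<in> B \<Longrightarrow> norm (u b) = 1"
    and A: "A = (\<Sum>b\<in>B. rank_one (complex_of_real (s b)) (u b) b)"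
    and tn: "trace_norm A = (\<Sum>b\<in>B. s b)"
    by (rule singular_value_decomposition[of A]) (rule that)
  have "cmod (trace A) \<le> (\<Sum>b\<in>B. cmod (complex_of_real (s b) * cinner b (u b)))"
    by (simp add: A trace_sum trace_rank_one norm_sum)
  also have "\<dots> \<le> (\<Sum>b\<in>B. s b)"
  proof (intro sum_mono)
    fix b assume b: "b \<in> B"
    have "cmod (cinner b (u b)) \<le> 1"
      using cinner_Cauchy_Schwarz[of b "u b"] u[OF b] orthonormal_basis_norm[OF B b] by simp
    then show "cmod (complex_of_real (s b) * cinner b (u b)) \<le> s b"
      using s[OF b] by (simp add: norm_mult mult_left_le)
  qed
  finally show ?thesis by (simp add: tn)
qed

lemma norm_entry_le_trace_norm: "cmod (A$i$j) \<le> trace_norm A"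
proof -
  obtain B s u where B: "orthonormal_basis B" and s: "\<And>b. b \<in> B \<Longrightarrow> s b \<ge> 0"
    and u: "\<And>b. b \<in> B \<Longrightarrow> norm (u b) = 1"
    and A: "A = (\<Sum>b\<in>B. rank_one (complex_of_real (s b)) (u b) b)"
    and tn: "trace_norm A = (\<Sum>b\<in>B. s b)"
    by (rule singular_value_decomposition[of A]) (rule that)
  have "cmod (A$i$j) \<le> (\<Sum>b\<in>B. cmod (complex_of_real (s b) * (u b)$i * cnj (b$j)))"
    by (simp add: A rank_one_def norm_sum)
  also have "\<dots> \<le> (\<Sum>b\<in>B. s b)"
  proof (intro sum_mono)
    fix b assume b: "b \<in> B"
    have "cmod ((u b)$i) * cmod (b$j) \<le> 1"
      using Finite_Cartesian_Product.norm_nth_le[of "u b" i] u[OF b]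
        Finite_Cartesian_Product.norm_nth_le[of b j] orthonormal_basis_norm[OF B b]
      by (simp add: mult_le_one)
    then show "cmod (complex_of_real (s b) * (u b)$i * cnj (b$j)) \<le> s b"
      using s[OF b] by (simp add: norm_mult mult.assoc mult_left_le)
  qed
  finally show ?thesis by (simp add: tn)
qed

lemma trace_norm_density_matrix: "density_matrix \<rho> \<Longrightarrow> trace_norm \<rho> = 1"
  by (simp add: density_matrix_def trace_norm_def mat_abs_psd)

section \<open>Linear maps and the ergodicity coefficient\<close>

lemma clinear_map_add: "clinear_map F \<Longrightarrow> F (X + Y) = F X + F Y"
  by (simp add: clinear_map_def)

lemma clinear_map_mat_scale: "clinear_map F \<Longrightarrow> F (mat_scale c X) = mat_scale c (F X)"
  by (simp add: clinear_map_def mat_scale_def)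

lemma clinear_map_0: "clinear_map F \<Longrightarrow> F 0 = 0"
  using clinear_map_add[of F 0 0] by simp

lemma clinear_map_diff: "clinear_map F \<Longrightarrow> F (X - Y) = F X - F Y"
  using clinear_map_add[of F "X - Y" Y] by (simp add: algebra_simps)

lemma clinear_map_sum: "clinear_map F \<Longrightarrow> F (\<Sum>k\<in>K. M k) = (\<Sum>k\<in>K. F (M k))"
  by (induction K rule: infinite_finite_induct) (simp_all add: clinear_map_0 clinear_map_add)

definition mat_unit :: "'n \<Rightarrow> 'n \<Rightarrow> complex^'n^'n" where
  "mat_unit i j = (\<chi> k l. if k = i \<and> l = j then 1 else 0)"

lemma mat_unit_expansion: "X = (\<Sum>i\<in>UNIV. \<Sum>j\<in>UNIV. mat_scale (X$i$j) (mat_unit i j))"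
proof -
  have "(\<Sum>j\<in>UNIV. mat_scale (X$i$j) (mat_unit i j) $ k $ l) = (if i = k then X$k$l else 0)"
    for i k l
    by (cases "i = k") (simp_all add: mat_scale_def mat_unit_def if_distrib cong: if_cong)
  then show ?thesis by (simp add: vec_eq_iff)
qed

lemma clinear_map_trace_norm_bounded:
  assumes F: "clinear_map F"
  defines "C \<equiv> (\<Sum>i\<in>UNIV. \<Sum>j\<in>UNIV. trace_norm (F (mat_unit i j)))"
  shows "trace_norm (F X) \<le> C * trace_norm X"
proof -
  have "F X = (\<Sum>i\<in>UNIV. \<Sum>j\<in>UNIV. mat_scale (X$i$j) (F (mat_unit i j)))"
    by (subst mat_unit_expansion[of X])
      (simp add: clinear_map_sum[OF F] clinear_map_mat_scale[OF F])
  then have "trace_norm (F X)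
      \<le> (\<Sum>i\<in>UNIV. trace_norm (\<Sum>j\<in>UNIV. mat_scale (X$i$j) (F (mat_unit i j))))"
    using trace_norm_sum by simp
  also have "\<dots> \<le> (\<Sum>i\<in>UNIV. \<Sum>j\<in>UNIV. trace_norm (mat_scale (X$i$j) (F (mat_unit i j))))"
    by (intro sum_mono trace_norm_sum)
  also have "\<dots> \<le> (\<Sum>i\<in>UNIV. \<Sum>j\<in>UNIV. trace_norm X * trace_norm (F (mat_unit i j)))"
  proof (intro sum_mono)
    fix i j
    have "trace_norm (mat_scale (X$i$j) (F (mat_unit i j)))
        \<le> cmod (X$i$j) * trace_norm (F (mat_unit i j))"
      by (rule trace_norm_mat_scale)
    also have "\<dots> \<le> trace_norm X * trace_norm (F (mat_unit i j))"
      by (intro mult_right_mono norm_entry_le_trace_norm trace_norm_nonneg)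
    finally show "trace_norm (mat_scale (X$i$j) (F (mat_unit i j)))
        \<le> trace_norm X * trace_norm (F (mat_unit i j))" .
  qed
  also have "\<dots> = C * trace_norm X" by (simp add: C_def sum_distrib_left mult.commute)
  finally show ?thesis .
qed

lemma ergodicity_coeff_bdd_above:
  assumes "clinear_map F"
  shows "bdd_above (insert 0 {trace_norm (F \<sigma>) / trace_norm \<sigma> | \<sigma>. \<sigma> \<noteq> 0 \<and> trace \<sigma> = 0})"
proof -
  obtain C where C: "\<And>X. trace_norm (F X) \<le> C * trace_norm X"
    using clinear_map_trace_norm_bounded[OF assms] by blast
  have "trace_norm (F \<sigma>) / trace_norm \<sigma> \<le> max 0 C" if "\<sigma> \<noteq> 0" for \<sigma>
  proof -
    have "trace_norm (F \<sigma>) \<le> max 0 C * trace_norm \<sigma>"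
      using C[of \<sigma>] trace_norm_nonneg[of \<sigma>] by (meson max.cobounded2 mult_right_mono order_trans)
    then show ?thesis using trace_norm_pos[OF that] by (simp add: divide_le_eq)
  qed
  then show ?thesis by (intro bdd_aboveI[where M = "max 0 C"]) auto
qed

lemma ergodicity_coeff_nonneg: "clinear_map F \<Longrightarrow> ergodicity_coeff F \<ge> 0"
  unfolding ergodicity_coeff_def by (rule cSup_upper[OF _ ergodicity_coeff_bdd_above]) simp_all

lemma trace_norm_le_ergodicity_coeff:
  assumes "clinear_map F" and "trace X = 0"
  shows "trace_norm (F X) \<le> ergodicity_coeff F * trace_norm X"
proof (cases "X = 0")
  case False
  have "trace_norm (F X) / trace_norm X \<le> ergodicity_coeff F"
    unfolding ergodicity_coeff_def
    using False assms by (intro cSup_upper[OF _ ergodicity_coeff_bdd_above]) blast+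
  then show ?thesis using trace_norm_pos[OF False] by (simp add: divide_le_eq)
qed (simp add: clinear_map_0[OF assms(1)])

section \<open>The fundamental channel\<close>

definition fundamental_map ::
    "(complex^'n^'n \<Rightarrow> complex^'n^'n) \<Rightarrow> complex^'n^'n \<Rightarrow> complex^'n^'n \<Rightarrow> complex^'n^'n" where
  "fundamental_map F \<rho> X = X - F X + limit_channel \<rho> X"

lemma fundamental_channel_eq_inv: "fundamental_channel F \<rho> = inv (fundamental_map F \<rho>)"
  unfolding fundamental_channel_def fundamental_map_def ..

lemma limit_channel_eq_mat_scale: "limit_channel \<rho> X = mat_scale (trace X) \<rho>"
  by (simp add: limit_channel_def mat_scale_def)

lemma fundamental_map_linear:
  assumes "clinear_map F"
  shows "linear (fundamental_map F \<rho>)"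
proof (rule linearI)
  show "fundamental_map F \<rho> (X + Y) = fundamental_map F \<rho> X + fundamental_map F \<rho> Y" for X Y
    by (simp add: fundamental_map_def limit_channel_eq_mat_scale clinear_map_add[OF assms]
        trace_add mat_scale_add_left)
  show "fundamental_map F \<rho> (r *\<^sub>R X) = r *\<^sub>R fundamental_map F \<rho> X" for r X
    by (simp add: fundamental_map_def limit_channel_eq_mat_scale scaleR_eq_mat_scale
        clinear_map_mat_scale[OF assms] trace_mat_scale mat_scale_mat_scale mat_scale_add_right
        mat_scale_diff_right mult.commute)
qed

lemma trace_norm_fundamental_map_preimage:
  assumes F: "clinear_map F" "trace_preserving F" and "ergodicity_coeff F \<le> 1"
    and \<rho>: "trace \<rho> = 1" "trace_norm \<rho> \<le> 1" "F \<rho> = \<rho>"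
  defines "\<tau> \<equiv> ergodicity_coeff F"
  shows "(1 - \<tau>) * trace_norm Y \<le> (1 + \<tau>) * trace_norm (fundamental_map F \<rho> Y)"
proof -
  define \<sigma> where "\<sigma> = fundamental_map F \<rho> Y"
  define L where "L = mat_scale (trace \<sigma>) \<rho>"
  define Y0 where "Y0 = Y - L"
  have trace_Y: "trace Y = trace \<sigma>"
    using F(2) \<rho>(1) by (simp add: \<sigma>_def fundamental_map_def limit_channel_eq_mat_scale trace_add
        trace_sub trace_mat_scale trace_preserving_def)
  have F_Y0: "F Y0 = F Y - L"
    using \<rho>(3) by (simp add: Y0_def L_def clinear_map_diff[OF F(1)] clinear_map_mat_scale[OF F(1)])
  have "\<sigma> = Y - F Y + L"
    unfolding L_def trace_Y[symmetric]
    by (simp add: \<sigma>_def fundamental_map_def limit_channel_eq_mat_scale)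
  then have Y0_eq: "Y0 = (\<sigma> - L) + F Y0" and Y_eq: "Y = \<sigma> + F Y0"
    unfolding F_Y0 by (simp_all add: Y0_def)
  have "trace Y0 = 0" by (simp add: Y0_def L_def trace_sub trace_Y trace_mat_scale \<rho>(1))
  then have F_Y0_le: "trace_norm (F Y0) \<le> \<tau> * trace_norm Y0"
    unfolding \<tau>_def by (rule trace_norm_le_ergodicity_coeff[OF F(1)])
  have "trace_norm L \<le> cmod (trace \<sigma>) * trace_norm \<rho>"
    unfolding L_def by (rule trace_norm_mat_scale)
  also have "\<dots> \<le> trace_norm \<sigma>"
    using mult_left_le[OF \<rho>(2) norm_ge_zero[of "trace \<sigma>"]] norm_trace_le_trace_norm[of \<sigma>]
    by linarith
  finally have "trace_norm Y0 \<le> 2 * trace_norm \<sigma> + \<tau> * trace_norm Y0"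
    using trace_norm_triangle[of "\<sigma> - L" "F Y0"] trace_norm_diff[of \<sigma> L] F_Y0_le
    by (simp flip: Y0_eq)
  then have Y0_le: "(1 - \<tau>) * trace_norm Y0 \<le> 2 * trace_norm \<sigma>" by (simp add: algebra_simps)
  have "trace_norm Y \<le> trace_norm \<sigma> + \<tau> * trace_norm Y0"
    using trace_norm_triangle[of \<sigma> "F Y0"] F_Y0_le by (simp flip: Y_eq)
  then have "(1 - \<tau>) * trace_norm Y \<le> (1 - \<tau>) * (trace_norm \<sigma> + \<tau> * trace_norm Y0)"
    using \<open>ergodicity_coeff F \<le> 1\<close> by (simp add: \<tau>_def mult_left_mono)
  also have "\<dots> = (1 - \<tau>) * trace_norm \<sigma> + \<tau> * ((1 - \<tau>) * trace_norm Y0)"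
    by (simp add: algebra_simps)
  also have "\<dots> \<le> (1 - \<tau>) * trace_norm \<sigma> + \<tau> * (2 * trace_norm \<sigma>)"
    using Y0_le ergodicity_coeff_nonneg[OF F(1)] by (simp add: \<tau>_def mult_left_mono)
  finally show ?thesis by (simp add: \<sigma>_def algebra_simps)
qed

lemma fundamental_map_surj:
  assumes F: "clinear_map F" "trace_preserving F" and "ergodicity_coeff F < 1"
    and \<rho>: "trace \<rho> = 1" "trace_norm \<rho> \<le> 1" "F \<rho> = \<rho>"
  shows "surj (fundamental_map F \<rho>)"
proof -
  have "Y = 0" if "fundamental_map F \<rho> Y = 0" for Y
    using trace_norm_fundamental_map_preimage[OF F less_imp_le[OF assms(3)] \<rho>, of Y] that assms(3)
      trace_norm_nonneg[of Y]
    by (simp add: trace_norm_eq_0_iff mult_le_0_iff)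
  then have "inj (fundamental_map F \<rho>)"
    using fundamental_map_linear[OF F(1)] by (simp add: linear_inj_iff_eq_0)
  then show ?thesis
    using fundamental_map_linear[OF F(1)] linear_injective_imp_surjective by blast
qed

lemma norm_1to1_le:
  fixes Z :: "complex^'n^'n \<Rightarrow> complex^'n^'n"
  assumes "\<And>\<sigma>. trace_norm (Z \<sigma>) \<le> K * trace_norm \<sigma>"
  shows "norm_1to1 Z \<le> K"
proof -
  have "(mat 1 :: complex^'n^'n) \<noteq> 0" by (simp add: vec_eq_iff mat_def)
  then have "{trace_norm (Z \<sigma>) / trace_norm \<sigma> | \<sigma>::complex^'n^'n. \<sigma> \<noteq> 0} \<noteq> {}" by blast
  moreover have "trace_norm (Z \<sigma>) / trace_norm \<sigma> \<le> K" if "\<sigma> \<noteq> 0" for \<sigma>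
    using assms[of \<sigma>] trace_norm_pos[OF that] by (simp add: divide_le_eq)
  ultimately show ?thesis unfolding norm_1to1_def by (intro cSup_least) auto
qed

theorem mainTheorem8:
  fixes F :: "complex^'n^'n \<Rightarrow> complex^'n^'n" and \<rho> :: "complex^'n^'n"
  assumes "cptp F"
    and "ergodicity_coeff F < 1"
    and "density_matrix \<rho>" and "F \<rho> = \<rho>"
  shows "norm_1to1 (fundamental_channel F \<rho>)
           \<le> (1 + ergodicity_coeff F) / (1 - ergodicity_coeff F)"
proof -
  let ?G = "fundamental_map F \<rho>" and ?\<tau> = "ergodicity_coeff F"
  have F: "clinear_map F" "trace_preserving F" using assms(1) by (simp_all add: cptp_def)
  have \<rho>: "trace \<rho> = 1" "trace_norm \<rho> \<le> 1"
    using assms(3) by (simp_all add: density_matrix_def trace_norm_density_matrix)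
  have "surj ?G" using fundamental_map_surj[OF F assms(2) \<rho> assms(4)] .
  have "trace_norm (inv ?G \<sigma>) \<le> (1 + ?\<tau>) / (1 - ?\<tau>) * trace_norm \<sigma>" for \<sigma>
    using trace_norm_fundamental_map_preimage[OF F less_imp_le[OF assms(2)] \<rho> assms(4),
        of "inv ?G \<sigma>"] surj_f_inv_f[OF \<open>surj ?G\<close>, of \<sigma>] assms(2)
    by (simp add: field_simps)
  then show ?thesis unfolding fundamental_channel_eq_inv by (rule norm_1to1_le)
qed

end
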